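(* Let $X$ be the dihedral quandle $R_n$. (1) If $n$ is odd, the identity map is the only good involution of $X$. (2) If $n=2m$ with $m$ odd, a good involution of $X$ is either the identity map or the antipodal map. (3) If $n=2m$ with $m$ even, there are exactly four good involutions: the identity map, the antipodal map and the two half-antipodal maps.
   Context: A quandle is a set $X$ with a binary operation $(x,y)\mapsto x^y$ such that $x^x=x$; for all $x,y$ there is a unique $z$ with $z^y=x$ (written $x^{y^{-1}}$); and $(x^y)^z=(x^z)^{(y^z)}$. A good involution of $X$ is a map $\rho:X\to X$ with $\rho\circ\rho={\rm id}$, $\rho(x^y)=\rho(x)^y$ and $x^{\rho(y)}=x^{y^{-1}}$ for all $x,y$. The dihedral quandle $R_n$ is $\mathbb{Z}/n\mathbb{Z}$ with $x^y=2y-x \pmod n$. For $n=2m$, the antipodal map is $i\mapsto i+m$. For $n=2m$ with $m$ even, the half-antipodal maps are $\rho_1$ with $\rho_1(i)=i$ for odd $i$ and $\rho_1(i)=i+m$ for even $i$, and $\rho_2$ with $\rho_2(i)=i+m$ for odd $i$ and $\rho_2(i)=i$ for even $i$ (parity is well defined since $n$ is even). *)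

theory Defs
  imports Main
begin

definition quandle :: "'a set \<Rightarrow> ('a \<Rightarrow> 'a \<Rightarrow> 'a) \<Rightarrow> bool" where
  "quandle X op \<longleftrightarrow>
     (\<forall>x\<in>X. \<forall>y\<in>X. op x y \<in> X) \<and>
     (\<forall>x\<in>X. op x x = x) \<and>
     (\<forall>x\<in>X. \<forall>y\<in>X. \<exists>!z. z \<in> X \<and> op z y = x) \<and>
     (\<forall>x\<in>X. \<forall>y\<in>X. \<forall>z\<in>X. op (op x y) z = op (op x z) (op y z))"

definition qinv :: "'a set \<Rightarrow> ('a \<Rightarrow> 'a \<Rightarrow> 'a) \<Rightarrow> 'a \<Rightarrow> 'a \<Rightarrow> 'a" where
  "qinv X op x y = (THE z. z \<in> X \<and> op z y = x)"

definition good_involution :: "'a set \<Rightarrow> ('a \<Rightarrow> 'a \<Rightarrow> 'a) \<Rightarrow> ('a \<Rightarrow> 'a) \<Rightarrow> bool" where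
  "good_involution X op \<rho> \<longleftrightarrow>
     (\<forall>x\<in>X. \<rho> x \<in> X) \<and>
     (\<forall>x\<in>X. \<rho> (\<rho> x) = x) \<and>
     (\<forall>x\<in>X. \<forall>y\<in>X. \<rho> (op x y) = op (\<rho> x) y) \<and>
     (\<forall>x\<in>X. \<forall>y\<in>X. op x (\<rho> y) = qinv X op x y)"

text \<open>Dihedral quandle R_n: carrier {0..<n} representing Z/nZ, x^y = 2y - x mod n.\<close>
definition dihedral_carrier :: "nat \<Rightarrow> int set" where
  "dihedral_carrier n = {0..<int n}"

definition dihedral_op :: "nat \<Rightarrow> int \<Rightarrow> int \<Rightarrow> int" where
  "dihedral_op n x y = (2 * y - x) mod int n"

definition antipodal :: "nat \<Rightarrow> int \<Rightarrow> int" where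
  "antipodal n i = (i + int n div 2) mod int n"

definition half_antipodal1 :: "nat \<Rightarrow> int \<Rightarrow> int" where
  "half_antipodal1 n i = (if odd i then i else (i + int n div 2) mod int n)"

definition half_antipodal2 :: "nat \<Rightarrow> int \<Rightarrow> int" where
  "half_antipodal2 n i = (if odd i then (i + int n div 2) mod int n else i)"

end

theory Submission
  imports Defs
begin

text \<open>Applying \<open>\<rho>(x\<^sup>y) = \<rho>(x)\<^sup>y\<close> with \<open>x \<in> {0, 1}\<close> gives
  \<open>\<rho>(2y - x) = (2y - x) + (\<rho>(x) - x)\<close>, so \<open>\<rho>\<close> translates even residues by one constant and odd
  residues by another; for odd \<open>n\<close> every residue is a double, so a single constant occurs.
  Since \<open>R\<^sub>n\<close> is involutory, \<open>x\<^sup>\<rho>\<^sup>(\<^sup>y\<^sup>) = x\<^sup>y\<^sup>\<^sup>-\<^sup>1\<close> says \<open>2\<rho>(y) \<equiv> 2y\<close>, so each translation is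
  \<open>0\<close> or \<open>n/2\<close>, and only \<open>0\<close> when \<open>n\<close> is odd. For \<open>n = 2m\<close> with \<open>m\<close> odd a translation by
  \<open>m\<close> flips parity, and \<open>\<rho> \<circ> \<rho> = id\<close> forces the two translations to agree; for \<open>m\<close> even all
  four combinations are good involutions.\<close>

lemma mod_add_dvd_right: "(c::int) dvd b \<Longrightarrow> (a + b) mod c = a mod c"
  by (simp add: mod_eq_dvd_iff)

lemma good_involution_cong:
  assumes "\<forall>x\<in>X. \<forall>y\<in>X. op x y \<in> X" and "\<forall>x\<in>X. \<rho> x = \<sigma> x"
  shows "good_involution X op \<rho> \<longleftrightarrow> good_involution X op \<sigma>"
  using assms unfolding good_involution_def by auto

lemma dihedral_op_mem: "n > 0 \<Longrightarrow> dihedral_op n x y \<in> dihedral_carrier n"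
  by (simp add: dihedral_op_def dihedral_carrier_def)

lemma dihedral_op_right_eq_iff:
  "dihedral_op n x z = dihedral_op n x y \<longleftrightarrow> (2 * z) mod int n = (2 * y) mod int n"
  by (simp add: dihedral_op_def mod_eq_dvd_iff algebra_simps)

lemma dihedral_qinv:
  assumes "n > 0" "x \<in> dihedral_carrier n" "y \<in> dihedral_carrier n"
  shows "qinv (dihedral_carrier n) (dihedral_op n) x y = dihedral_op n x y"
  unfolding qinv_def
proof (rule the_equality)
  show "dihedral_op n x y \<in> dihedral_carrier n \<and> dihedral_op n (dihedral_op n x y) y = x"
    using assms by (auto simp: dihedral_carrier_def dihedral_op_def mod_diff_right_eq)
next
  fix z assume "z \<in> dihedral_carrier n \<and> dihedral_op n z y = x"
  then have "z = (2 * y - (2 * y - z) mod int n) mod int n" and "dihedral_op n z y = x"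
    by (auto simp: dihedral_carrier_def dihedral_op_def mod_diff_right_eq)
  then show "z = dihedral_op n x y"
    by (simp add: dihedral_op_def)
qed

lemma good_involution_dihedral_iff:
  assumes "n > 0"
  shows "good_involution (dihedral_carrier n) (dihedral_op n) \<rho> \<longleftrightarrow>
    (\<forall>x\<in>dihedral_carrier n. \<rho> x \<in> dihedral_carrier n \<and> \<rho> (\<rho> x) = x \<and>
       (2 * \<rho> x) mod int n = (2 * x) mod int n) \<and>
    (\<forall>x\<in>dihedral_carrier n. \<forall>y\<in>dihedral_carrier n.
       \<rho> (dihedral_op n x y) = dihedral_op n (\<rho> x) y)"
proof -
  have "(\<forall>x\<in>dihedral_carrier n. \<forall>y\<in>dihedral_carrier n.
          dihedral_op n x (\<rho> y) = qinv (dihedral_carrier n) (dihedral_op n) x y) \<longleftrightarrow>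
        (\<forall>x\<in>dihedral_carrier n. \<forall>y\<in>dihedral_carrier n.
          (2 * \<rho> y) mod int n = (2 * y) mod int n)"
    using assms by (simp add: dihedral_qinv dihedral_op_right_eq_iff)
  also have "\<dots> \<longleftrightarrow> (\<forall>y\<in>dihedral_carrier n. (2 * \<rho> y) mod int n = (2 * y) mod int n)"
    using assms by (auto simp: dihedral_carrier_def)
  finally show ?thesis
    unfolding good_involution_def by blast
qed

lemma good_involution_dihedral_double:
  assumes "n > 0" "good_involution (dihedral_carrier n) (dihedral_op n) \<rho>"
    and "x \<in> dihedral_carrier n"
  shows "int n dvd 2 * (\<rho> x - x)"
proof -
  have "(2 * \<rho> x) mod int n = (2 * x) mod int n"
    using assms unfolding good_involution_dihedral_iff[OF \<open>n > 0\<close>] by blast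
  then show ?thesis by (simp add: mod_eq_dvd_iff right_diff_distrib)
qed

lemma good_involution_dihedral_translate:
  assumes "n > 0" "good_involution (dihedral_carrier n) (dihedral_op n) \<rho>"
    and x: "x \<in> dihedral_carrier n" and y: "y \<in> dihedral_carrier n"
  shows "\<rho> ((2 * y - x) mod int n) = (2 * y - x + (\<rho> x - x)) mod int n"
proof -
  have "\<rho> ((2 * y - x) mod int n) = (2 * y - \<rho> x) mod int n"
    using assms unfolding good_involution_dihedral_iff[OF \<open>n > 0\<close>] dihedral_op_def by blast
  also have "\<dots> = (2 * y - \<rho> x + 2 * (\<rho> x - x)) mod int n"
    by (rule mod_add_dvd_right[symmetric, OF good_involution_dihedral_double[OF assms(1,2) x]])
  finally show ?thesis by (simp add: algebra_simps)
qed

lemma good_involution_dihedral_odd: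
  assumes "odd n" "good_involution (dihedral_carrier n) (dihedral_op n) \<rho>"
    and z: "z \<in> dihedral_carrier n"
  shows "\<rho> z = z"
proof -
  have n: "n > 0" using \<open>odd n\<close> by presburger
  have X0: "0 \<in> dihedral_carrier n" using n by (simp add: dihedral_carrier_def)
  \<comment> \<open>\<open>(n + 1) / 2\<close> inverts \<open>2\<close> modulo \<open>n\<close>, so \<open>z\<close> is the double of \<open>y\<close>\<close>
  define y where "y = (z * ((int n + 1) div 2)) mod int n"
  have y: "y \<in> dihedral_carrier n" using n by (simp add: y_def dihedral_carrier_def)
  have "(2 * y) mod int n = (z * (2 * ((int n + 1) div 2))) mod int n"
    unfolding y_def by (simp add: mod_mult_right_eq mult.left_commute)
  also have "2 * ((int n + 1) div 2) = int n + 1" using \<open>odd n\<close> by presburger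
  finally have z_eq: "(2 * y) mod int n = z"
    using z by (simp add: distrib_left dihedral_carrier_def)
  have "int n dvd 2 * \<rho> 0"
    using good_involution_dihedral_double[OF n assms(2) X0] by simp
  moreover have "coprime (int n) 2" using \<open>odd n\<close> by simp
  ultimately have "int n dvd \<rho> 0"
    by (simp add: coprime_dvd_mult_right_iff)
  then have "\<rho> z = (2 * y) mod int n"
    using good_involution_dihedral_translate[OF n assms(2) X0 y] z_eq by (simp add: mod_add_dvd_right)
  with z_eq show ?thesis by simp
qed

definition parity_shift :: "nat \<Rightarrow> int \<Rightarrow> int \<Rightarrow> int \<Rightarrow> int" where
  "parity_shift n a b x = (x + (if even x then a else b)) mod int n"

lemma good_involution_dihedral_even:
  assumes "even n" "n > 0" "good_involution (dihedral_carrier n) (dihedral_op n) \<rho>"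
    and z: "z \<in> dihedral_carrier n"
  shows "\<rho> z = parity_shift n (\<rho> 0) (\<rho> 1 - 1) z"
proof -
  have X01: "0 \<in> dihedral_carrier n" "1 \<in> dihedral_carrier n"
    using assms(1,2) by (auto simp: dihedral_carrier_def)
  have z_mod: "z mod int n = z" using z by (simp add: dihedral_carrier_def)
  show ?thesis
  proof (cases "even z")
    case True
    then have "z div 2 \<in> dihedral_carrier n" and "2 * (z div 2) - 0 = z"
      using z by (auto simp: dihedral_carrier_def)
    then show ?thesis
      using good_involution_dihedral_translate[OF assms(2,3) X01(1), of "z div 2"] True z_mod
      by (simp add: parity_shift_def)
  next
    case False
    then have "(z + 1) div 2 \<in> dihedral_carrier n" and "2 * ((z + 1) div 2) - 1 = z"
      using z by (auto simp: dihedral_carrier_def) presburger+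
    then show ?thesis
      using good_involution_dihedral_translate[OF assms(2,3) X01(2), of "(z + 1) div 2"] False z_mod
      by (simp add: parity_shift_def)
  qed
qed

lemma mod_half_cases:
  fixes c m :: int
  assumes "int n = 2 * m" "int n dvd 2 * c"
  shows "c mod int n \<in> {0, m}"
proof -
  obtain k where "2 * c = int n * k" using assms(2) by blast
  then have c: "c = m * k" using assms(1) by simp
  show ?thesis
  proof (cases "even k")
    case True
    then show ?thesis using c assms(1) by (auto elim!: evenE)
  next
    case False
    then obtain j where "k = 2 * j + 1" by (auto elim!: oddE)
    then have "c mod int n = m mod int n"
      using c assms(1) by (simp add: algebra_simps mod_add_dvd_right)
    then show ?thesis using assms(1) by (cases "m = 0") auto
  qed
qed

lemma parity_shift_mod: "parity_shift n (a mod int n) (b mod int n) x = parity_shift n a b x"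
  by (simp add: parity_shift_def mod_add_right_eq)

lemma good_involution_dihedral_even_classify:
  assumes n: "n = 2 * m" "m > 0"
    and good: "good_involution (dihedral_carrier n) (dihedral_op n) \<rho>"
  shows "\<exists>a\<in>{0, int m}. \<exists>b\<in>{0, int m}. \<forall>x\<in>dihedral_carrier n. \<rho> x = parity_shift n a b x"
proof -
  have n0: "n > 0" and "even n" and nm: "int n = 2 * int m" using n by simp_all
  have X01: "0 \<in> dihedral_carrier n" "1 \<in> dihedral_carrier n"
    using n by (auto simp: dihedral_carrier_def)
  have a: "\<rho> 0 mod int n \<in> {0, int m}"
    using mod_half_cases[OF nm] good_involution_dihedral_double[OF n0 good X01(1)] by simp
  have b: "(\<rho> 1 - 1) mod int n \<in> {0, int m}"
    using mod_half_cases[OF nm good_involution_dihedral_double[OF n0 good X01(2)]] .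
  have "\<forall>x\<in>dihedral_carrier n. \<rho> x = parity_shift n (\<rho> 0 mod int n) ((\<rho> 1 - 1) mod int n) x"
    using good_involution_dihedral_even[OF \<open>even n\<close> n0 good] by (simp add: parity_shift_mod)
  with a b show ?thesis by (intro bexI)
qed

lemma good_involution_parity_shift:
  assumes n: "n = 2 * m" "m > 0" and ab: "a \<in> {0, int m}" "b \<in> {0, int m}"
    and compatible: "a = b \<or> even m"
  shows "good_involution (dihedral_carrier n) (dihedral_op n) (parity_shift n a b)"
proof -
  define s where "s x = (if even x then a else b)" for x :: int
  have ps: "parity_shift n a b x = (x + s x) mod int n" for x
    by (simp add: parity_shift_def s_def)
  have n0: "n > 0" and "even (int n)" using n by simp_all
  have dvd_2s: "int n dvd 2 * s x" for x
    using ab n by (auto simp: s_def)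
  have s_mod: "s (z mod int n) = s z" for z
    using \<open>even (int n)\<close> by (simp add: s_def dvd_mod_iff)
  have s_reflect: "s (2 * y - x) = s x" for x y
    by (simp add: s_def)
  have s_shift: "s (x + s x) = s x" for x
    using compatible ab by (auto simp: s_def)
  have ps_ps: "parity_shift n a b (parity_shift n a b x) = (x + 2 * s x) mod int n" for x
    by (simp add: ps s_mod s_shift mod_add_left_eq mod_add_right_eq algebra_simps)
  show ?thesis
    unfolding good_involution_dihedral_iff[OF n0]
  proof (intro conjI ballI)
    fix x assume x: "x \<in> dihedral_carrier n"
    then have x_mod: "x mod int n = x" by (simp add: dihedral_carrier_def)
    show "parity_shift n a b x \<in> dihedral_carrier n"
      using n0 by (simp add: ps dihedral_carrier_def)
    show "parity_shift n a b (parity_shift n a b x) = x"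
      using ps_ps mod_add_dvd_right[OF dvd_2s] x_mod by simp
    have "(2 * parity_shift n a b x) mod int n = (2 * x + 2 * s x) mod int n"
      by (simp add: ps mod_mult_right_eq distrib_left)
    then show "(2 * parity_shift n a b x) mod int n = (2 * x) mod int n"
      by (simp add: mod_add_dvd_right[OF dvd_2s])
    fix y
    have "parity_shift n a b (dihedral_op n x y) = (2 * y - x + s x) mod int n"
      by (simp add: ps dihedral_op_def s_mod s_reflect mod_add_left_eq)
    also have "\<dots> = (2 * y - x - s x + 2 * s x) mod int n"
      by (simp add: algebra_simps)
    also have "\<dots> = (2 * y - x - s x) mod int n"
      by (rule mod_add_dvd_right[OF dvd_2s])
    also have "\<dots> = dihedral_op n (parity_shift n a b x) y"
      by (simp add: ps dihedral_op_def mod_diff_right_eq algebra_simps)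
    finally show "parity_shift n a b (dihedral_op n x y) = dihedral_op n (parity_shift n a b x) y" .
  qed
qed

lemma parity_shift_involutive_imp_eq:
  assumes n: "n = 2 * m" "odd m" and ab: "a \<in> {0, int m}" "b \<in> {0, int m}"
    and involutive: "\<forall>x\<in>dihedral_carrier n. parity_shift n a b (parity_shift n a b x) = x"
  shows "a = b"
proof (rule ccontr)
  assume "a \<noteq> b"
  have m: "int m mod int n = int m" "0 \<in> dihedral_carrier n" "1 \<in> dihedral_carrier n"
    using n by (auto simp: dihedral_carrier_def) presburger+
  consider "a = int m" "b = 0" | "a = 0" "b = int m"
    using ab \<open>a \<noteq> b\<close> by auto
  then show False
  proof cases
    case 1
    then have "parity_shift n a b (parity_shift n a b 0) = int m"
      using n m by (simp add: parity_shift_def)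
    then show False using involutive m n by fastforce
  next
    case 2
    define v where "v = (1 + int m) mod int n"
    have "even v" using n by (simp add: v_def dvd_mod_iff)
    then have "parity_shift n a b (parity_shift n a b 1) = v"
      using 2 by (simp add: parity_shift_def v_def)
    then show False using involutive m \<open>even v\<close> by fastforce
  qed
qed

lemma good_involution_dihedral_even_iff:
  assumes n: "n = 2 * m" "m > 0"
  shows "good_involution (dihedral_carrier n) (dihedral_op n) \<rho> \<longleftrightarrow>
    (\<exists>a\<in>{0, int m}. \<exists>b\<in>{0, int m}. (a = b \<or> even m) \<and>
       (\<forall>x\<in>dihedral_carrier n. \<rho> x = parity_shift n a b x))"
    (is "?good \<rho> \<longleftrightarrow> ?shift")
proof
  assume good: "?good \<rho>"
  then obtain a b where ab: "a \<in> {0, int m}" "b \<in> {0, int m}"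
    and \<rho>: "\<forall>x\<in>dihedral_carrier n. \<rho> x = parity_shift n a b x"
    using good_involution_dihedral_even_classify[OF n] by blast
  have "parity_shift n a b (parity_shift n a b x) = x" if x: "x \<in> dihedral_carrier n" for x
  proof -
    have "\<rho> x \<in> dihedral_carrier n" "\<rho> (\<rho> x) = x"
      using good x unfolding good_involution_def by blast+
    then show ?thesis using \<rho> x by simp
  qed
  then have "a = b \<or> even m"
    using parity_shift_involutive_imp_eq[OF n(1) _ ab] by blast
  with ab \<rho> show ?shift by blast
next
  assume ?shift
  then obtain a b where ab: "a \<in> {0, int m}" "b \<in> {0, int m}" "a = b \<or> even m"
    and \<rho>: "\<forall>x\<in>dihedral_carrier n. \<rho> x = parity_shift n a b x"
    by blast
  have "?good (parity_shift n a b)"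
    using good_involution_parity_shift[OF n ab] .
  moreover have "\<forall>x\<in>dihedral_carrier n. \<forall>y\<in>dihedral_carrier n.
      dihedral_op n x y \<in> dihedral_carrier n"
    using n by (simp add: dihedral_op_mem)
  ultimately show "?good \<rho>"
    using good_involution_cong[of "dihedral_carrier n" "dihedral_op n" \<rho>] \<rho> by blast
qed

lemma good_involution_dihedral_odd_iff:
  assumes "odd n"
  shows "good_involution (dihedral_carrier n) (dihedral_op n) \<rho> \<longleftrightarrow>
    (\<forall>x\<in>dihedral_carrier n. \<rho> x = x)"
proof
  assume "\<forall>x\<in>dihedral_carrier n. \<rho> x = x"
  moreover have "n > 0" using assms by presburger
  ultimately show "good_involution (dihedral_carrier n) (dihedral_op n) \<rho>"
    unfolding good_involution_dihedral_iff[OF \<open>n > 0\<close>] by (simp add: dihedral_op_mem)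
qed (use good_involution_dihedral_odd[OF assms] in blast)

lemma dihedral_involutions_as_parity_shift:
  assumes "n = 2 * m" and x: "x \<in> dihedral_carrier n"
  shows "x = parity_shift n 0 0 x"
    and "antipodal n x = parity_shift n (int m) (int m) x"
    and "half_antipodal1 n x = parity_shift n (int m) 0 x"
    and "half_antipodal2 n x = parity_shift n 0 (int m) x"
  using assms
  by (auto simp: parity_shift_def antipodal_def half_antipodal1_def half_antipodal2_def
      dihedral_carrier_def)

lemma parity_shift_eq_on_carrier_iff:
  assumes n: "n = 2 * m" "m > 0"
    and ab: "a \<in> {0, int m}" "b \<in> {0, int m}" "a' \<in> {0, int m}" "b' \<in> {0, int m}"
  shows "(\<forall>x\<in>dihedral_carrier n. parity_shift n a b x = parity_shift n a' b' x) \<longleftrightarrow>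
    a = a' \<and> b = b'"
proof
  assume eq: "\<forall>x\<in>dihedral_carrier n. parity_shift n a b x = parity_shift n a' b' x"
  have X01: "0 \<in> dihedral_carrier n" "1 \<in> dihedral_carrier n"
    using n by (auto simp: dihedral_carrier_def)
  have small: "c mod int n = c" if "c \<in> {0, int m}" for c
    using that n by auto
  have "a mod int n = a' mod int n" "(1 + b) mod int n = (1 + b') mod int n"
    using eq X01 by (auto simp: parity_shift_def)
  then have "a mod int n = a' mod int n" "b mod int n = b' mod int n"
    by (simp_all add: mod_eq_dvd_iff)
  then show "a = a' \<and> b = b'"
    using small ab by metis
qed simp

lemma card_good_involutions_dihedral_even:
  assumes n: "n = 2 * m" "m > 0" "even m"
  shows "card ((\<lambda>\<rho>. \<lambda>x. if x \<in> dihedral_carrier n then \<rho> x else 0) `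
      {\<rho>. good_involution (dihedral_carrier n) (dihedral_op n) \<rho>}) = 4"
proof -
  define r where "r \<rho> = (\<lambda>x. if x \<in> dihedral_carrier n then \<rho> x else 0)" for \<rho> :: "int \<Rightarrow> int"
  have r_eq: "r \<rho> = r \<sigma> \<longleftrightarrow> (\<forall>x\<in>dihedral_carrier n. \<rho> x = \<sigma> x)" for \<rho> \<sigma>
    by (auto simp: r_def fun_eq_iff)
  define S where "S = {0, int m} \<times> {0, int m}"
  have "r ` {\<rho>. good_involution (dihedral_carrier n) (dihedral_op n) \<rho>} =
      (\<lambda>(a, b). r (parity_shift n a b)) ` S"
    using good_involution_dihedral_even_iff[OF n(1,2)] n(3) r_eq
    by (auto simp: S_def image_iff)
  moreover have "inj_on (\<lambda>(a, b). r (parity_shift n a b)) S"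
    using parity_shift_eq_on_carrier_iff[OF n(1,2)] r_eq by (auto simp: inj_on_def S_def)
  moreover have "card S = 4"
    using n by (simp add: S_def card_cartesian_product)
  ultimately show ?thesis
    unfolding r_def[symmetric] by (simp add: card_image)
qed

theorem theorem3p2:
  fixes n :: nat
  assumes "n \<ge> 1"
  shows
   "(odd n \<longrightarrow>
       (\<forall>\<rho>. good_involution (dihedral_carrier n) (dihedral_op n) \<rho> \<longleftrightarrow>
              (\<forall>x\<in>dihedral_carrier n. \<rho> x = x))) \<and>
    (\<forall>m. n = 2 * m \<and> odd m \<longrightarrow>
       (\<forall>\<rho>. good_involution (dihedral_carrier n) (dihedral_op n) \<rho> \<longrightarrow>
              (\<forall>x\<in>dihedral_carrier n. \<rho> x = x) \<or>
              (\<forall>x\<in>dihedral_carrier n. \<rho> x = antipodal n x))) \<and>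
    (\<forall>m. n = 2 * m \<and> even m \<longrightarrow>
       (\<forall>\<rho>. good_involution (dihedral_carrier n) (dihedral_op n) \<rho> \<longleftrightarrow>
              (\<forall>x\<in>dihedral_carrier n. \<rho> x = x) \<or>
              (\<forall>x\<in>dihedral_carrier n. \<rho> x = antipodal n x) \<or>
              (\<forall>x\<in>dihedral_carrier n. \<rho> x = half_antipodal1 n x) \<or>
              (\<forall>x\<in>dihedral_carrier n. \<rho> x = half_antipodal2 n x)) \<and>
       card ((\<lambda>\<rho>. \<lambda>x. if x \<in> dihedral_carrier n then \<rho> x else 0) `
             {\<rho>. good_involution (dihedral_carrier n) (dihedral_op n) \<rho>}) = 4)"
proof (intro conjI allI impI)
  show "good_involution (dihedral_carrier n) (dihedral_op n) \<rho> \<longleftrightarrow>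
      (\<forall>x\<in>dihedral_carrier n. \<rho> x = x)" if "odd n" for \<rho>
    using good_involution_dihedral_odd_iff[OF that] .
next
  fix m \<rho> assume "n = 2 * m \<and> odd m" "good_involution (dihedral_carrier n) (dihedral_op n) \<rho>"
  moreover from this have "m > 0" by presburger
  ultimately show "(\<forall>x\<in>dihedral_carrier n. \<rho> x = x) \<or>
      (\<forall>x\<in>dihedral_carrier n. \<rho> x = antipodal n x)"
    using good_involution_dihedral_even_iff dihedral_involutions_as_parity_shift by force
next
  fix m assume nm: "n = 2 * m \<and> even m"
  with assms have "m > 0" by presburger
  then show "card ((\<lambda>\<rho>. \<lambda>x. if x \<in> dihedral_carrier n then \<rho> x else 0) `
      {\<rho>. good_involution (dihedral_carrier n) (dihedral_op n) \<rho>}) = 4"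
    using card_good_involutions_dihedral_even nm by blast
  fix \<rho>
  show "good_involution (dihedral_carrier n) (dihedral_op n) \<rho> \<longleftrightarrow>
      (\<forall>x\<in>dihedral_carrier n. \<rho> x = x) \<or>
      (\<forall>x\<in>dihedral_carrier n. \<rho> x = antipodal n x) \<or>
      (\<forall>x\<in>dihedral_carrier n. \<rho> x = half_antipodal1 n x) \<or>
      (\<forall>x\<in>dihedral_carrier n. \<rho> x = half_antipodal2 n x)"
    using good_involution_dihedral_even_iff[of n m \<rho>] \<open>m > 0\<close> nm
      dihedral_involutions_as_parity_shift[of n m] by auto
qed

end
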